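(* Let $k\geq 1$ be an integer and let $\mathcal{B}$ be a Boolean algebra with $2^{k+1}$ elements, viewed as an MV-algebra $(\mathcal{B},\oplus,\lceil,0)$ with $x\oplus y=x\vee y$ and greatest element $\varepsilon$. Define matrices $M_{2^m}\in\mathcal{M}_{2^m}(\{0,1\})$ recursively by $M_2=\begin{pmatrix}0&1\\1&1\end{pmatrix}$ and $M_{2^{m+1}}=\begin{pmatrix}\mathbf{0}_{2^m}&M_{2^m}\\ M_{2^m}&M_{2^m}\end{pmatrix}$, where $\mathbf{0}_{2^m}$ is the $2^m\times 2^m$ zero matrix, and let $C_{2^{k+1}}$ be the binary block code whose codewords are the rows of $M_{2^{k+1}}$. Then: (1) the elements of $\mathcal{B}$ can be enumerated as $\alpha_0,\alpha_1,\dots,\alpha_{2^{k+1}-1}$ so that the binary block code attached to $\mathcal{B}$ (with respect to this enumeration) has attached matrix equal to $M_{2^{k+1}}$; (2) there is a binary operation $*$ on $C_{2^{k+1}}$ such that $(C_{2^{k+1}},* )$ is a Boolean algebra isomorphic to $\mathcal{B}$ (i.e. there is a bijection $f:C_{2^{k+1}}\to\mathcal{B}$ with $f(w*w')=f(w)\oplus f(w')$ for all codewords $w,w'$).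
   Context: For a finite MV-algebra $X=\{\alpha_0,\alpha_1,\dots,\alpha_{n-1}\}$ of order $n$ with greatest element $\varepsilon=\lceil 0$, the binary block code attached to $X$ consists of $n$ codewords $w_0,\dots,w_{n-1}$ of length $n$, where $w_j=i_0i_1\cdots i_{n-1}$ with $i_s=1$ if $\alpha_j\oplus\alpha_s=\varepsilon$ and $i_s=0$ otherwise. The matrix attached to the code is the $n\times n$ $0/1$ matrix whose $j$-th row is $w_j$. A Boolean algebra is an MV-algebra in which $x\oplus x=x$ for all $x$; in it $x\oplus y=x\vee y$. *)

theory Defs
  imports Main
begin

text \<open>The matrix M_{2^m} as a function of row/column indices (entries 0/1),
  for m \<ge> 1; only indices < 2^m are meaningful.
  mmat (Suc 0) is M_2 = [[0,1],[1,1]];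
  mmat (Suc (Suc m)) is the block matrix [[0, M], [M, M]] with M = mmat (Suc m).
  The value at m = 0 is irrelevant.\<close>
fun mmat :: "nat \<Rightarrow> nat \<Rightarrow> nat \<Rightarrow> nat" where
  "mmat 0 i j = 0"
| "mmat (Suc 0) i j = (if i = 0 \<and> j = 0 then 0 else 1)"
| "mmat (Suc (Suc m)) i j =
     (let h = 2 ^ Suc m in
      if i < h then (if j < h then 0 else mmat (Suc m) i (j - h))
      else (if j < h then mmat (Suc m) (i - h) j else mmat (Suc m) (i - h) (j - h)))"

definition mrow :: "nat \<Rightarrow> nat \<Rightarrow> nat list" where
  "mrow m j = map (\<lambda>s. mmat m j s) [0..<2 ^ m]"

definition code_C :: "nat \<Rightarrow> nat list set" where
  "code_C m = {mrow m j | j. j < 2 ^ m}"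

text \<open>Boolean algebra viewed as MV-algebra: x \<oplus> y = sup x y, greatest element top.
  Entry (j,s) of the matrix attached to the code of the algebra w.r.t. enumeration alpha.\<close>
definition attached_mat :: "(nat \<Rightarrow> 'a::boolean_algebra) \<Rightarrow> nat \<Rightarrow> nat \<Rightarrow> nat" where
  "attached_mat alpha j s = (if sup (alpha j) (alpha s) = top then 1 else 0)"

end

theory Submission
  imports Defs
begin

(* Entry (i, j) of M_{2^m} is 1 exactly when the binary expansions of i and j together cover
   all m positions.  A Boolean algebra with 2^n elements is the power set of its n atoms; listing
   the atoms as e_0, ..., e_{n-1} and letting alpha_j be the join of the e_p with bit p of j set,
   alpha_i \<squnion> alpha_j = \<top> iff every atom lies below alpha_i or alpha_j, i.e. iff the bits of
   i and j cover {0, ..., n-1}.  Distinct rows of M differ (compare them at the column with the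
   complementary bits), so codewords correspond to elements and * is \<squnion> transported along. *)

lemma bit_iff_le_of_less_double:
  fixes i :: nat
  assumes "i < 2 * 2 ^ q"
  shows "bit i q \<longleftrightarrow> 2 ^ q \<le> i"
proof -
  have "i div 2 ^ q < 2" using assms by (simp add: div_less_iff_less_mult)
  then have "i div 2 ^ q = (if 2 ^ q \<le> i then 1 else 0)"
    by (auto simp: le_div_geq)
  then show ?thesis by (simp add: bit_iff_odd)
qed

lemma take_bit_of_less_double:
  fixes i :: nat
  assumes "i < 2 * 2 ^ q"
  shows "take_bit q i = (if i < 2 ^ q then i else i - 2 ^ q)"
  using assms by (simp add: take_bit_eq_mod le_mod_geq)

lemma mmat_Suc_Suc:
  assumes "i < 2 ^ Suc (Suc m)" "j < 2 ^ Suc (Suc m)"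
  shows "mmat (Suc (Suc m)) i j =
    (if bit i (Suc m) \<or> bit j (Suc m)
     then mmat (Suc m) (take_bit (Suc m) i) (take_bit (Suc m) j) else 0)"
  using assms by (simp add: Let_def bit_iff_le_of_less_double take_bit_of_less_double)

lemma mmat_eq_bits:
  assumes "1 \<le> m" "i < 2 ^ m" "j < 2 ^ m"
  shows "mmat m i j = (if \<forall>p<m. bit i p \<or> bit j p then 1 else 0)"
  using assms
proof (induction m arbitrary: i j rule: nat_induct_at_least)
  case base
  then have "i \<in> {0, 1}" "j \<in> {0, 1}" by auto
  then show ?case by (auto simp: bit_iff_odd)
next
  case (Suc m)
  then obtain m' where m': "m = Suc m'" by (cases m) auto
  have step: "mmat (Suc m) i j =
      (if bit i m \<or> bit j m then mmat m (take_bit m i) (take_bit m j) else 0)"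
    using mmat_Suc_Suc Suc.prems by (simp add: m')
  have "mmat m (take_bit m i) (take_bit m j) =
      (if \<forall>p<m. bit (take_bit m i) p \<or> bit (take_bit m j) p then 1 else 0)"
    by (rule Suc.IH) simp_all
  moreover have "(\<forall>p<Suc m. bit i p \<or> bit j p) \<longleftrightarrow>
      (bit i m \<or> bit j m) \<and> (\<forall>p<m. bit (take_bit m i) p \<or> bit (take_bit m j) p)"
    by (auto simp: less_Suc_eq bit_take_bit_iff)
  ultimately show ?case by (simp add: step)
qed

definition bitset :: "nat \<Rightarrow> nat \<Rightarrow> nat set" where
  "bitset n j = {p. p < n \<and> bit j p}"

lemma bij_betw_bitset: "bij_betw (bitset n) {..<2 ^ n} (Pow {..<n})"
proof -
  have "inj_on (bitset n) {..<2 ^ n}"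
  proof (rule inj_onI)
    fix i j assume "i \<in> {..<2 ^ n}" "j \<in> {..<2 ^ n}" "bitset n i = bitset n j"
    then have "take_bit n i = i" "take_bit n j = j" "\<forall>p<n. bit i p \<longleftrightarrow> bit j p"
      by (auto simp: take_bit_nat_eq_self_iff bitset_def set_eq_iff)
    then show "i = j" by (metis bit_eq_iff bit_take_bit_iff)
  qed
  moreover have "bitset n ` {..<2 ^ n} \<subseteq> Pow {..<n}" by (auto simp: bitset_def)
  moreover have "card (Pow {..<n}) = card {..<2 ^ n :: nat}" by (simp add: card_Pow)
  ultimately show ?thesis
    by (metis bij_betw_def card_image card_subset_eq finite_Pow_iff finite_lessThan)
qed

lemma bitset_Un_eq_iff: "bitset n i \<union> bitset n j = {..<n} \<longleftrightarrow> (\<forall>p<n. bit i p \<or> bit j p)"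
  by (auto simp: bitset_def)

lemma bitset_subset: "bitset n j \<subseteq> {..<n}"
  by (auto simp: bitset_def)

lemma eq_if_same_covering_partners:
  fixes i j :: nat
  assumes "i < 2 ^ n" "j < 2 ^ n"
    and "\<And>s :: nat. s < 2 ^ n \<Longrightarrow> (\<forall>p<n. bit i p \<or> bit s p) \<longleftrightarrow> (\<forall>p<n. bit j p \<or> bit s p)"
  shows "i = j"
proof -
  have "bitset n i \<union> S = {..<n} \<longleftrightarrow> bitset n j \<union> S = {..<n}" if "S \<subseteq> {..<n}" for S
  proof -
    have "S \<in> bitset n ` {..<2 ^ n}" using that bij_betw_bitset[of n] by (simp add: bij_betw_def)
    then obtain s where "s < 2 ^ n" "S = bitset n s" by auto
    then show ?thesis using assms(3) by (simp add: bitset_Un_eq_iff)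
  qed
  from this[of "{..<n} - bitset n i"] this[of "{..<n} - bitset n j"]
  have "bitset n i = bitset n j" using bitset_subset by blast
  then show "i = j" using assms(1,2) bij_betw_bitset[of n] by (auto simp: bij_betw_def inj_on_def)
qed

lemma inj_on_mrow:
  assumes "1 \<le> n"
  shows "inj_on (mrow n) {..<2 ^ n}"
proof (rule inj_onI)
  fix i j assume i: "i \<in> {..<2 ^ n}" and j: "j \<in> {..<2 ^ n}" and "mrow n i = mrow n j"
  then have col: "mmat n i s = mmat n j s" if "s < 2 ^ n" for s
    using that by (auto simp: mrow_def)
  have "(\<forall>p<n. bit i p \<or> bit s p) \<longleftrightarrow> (\<forall>p<n. bit j p \<or> bit s p)" if "s < 2 ^ n" for s :: nat
    using col[OF that] that i j mmat_eq_bits[OF assms] by (metis lessThan_iff zero_neq_one)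
  then show "i = j" using i j eq_if_same_covering_partners by blast
qed

lemma bij_betw_mrow_code_C:
  assumes "1 \<le> n"
  shows "bij_betw (mrow n) {..<2 ^ n} (code_C n)"
  using inj_on_mrow[OF assms] by (auto simp: bij_betw_def code_C_def)

definition atom :: "'a::boolean_algebra \<Rightarrow> bool" where
  "atom a \<longleftrightarrow> a \<noteq> bot \<and> (\<forall>y \<le> a. y = bot \<or> y = a)"

definition atoms_below :: "'a::boolean_algebra \<Rightarrow> 'a set" where
  "atoms_below x = {a. atom a \<and> a \<le> x}"

lemma atom_le_or_le_compl:
  assumes "atom a" shows "a \<le> x \<or> a \<le> - x"
proof -
  have "inf a x = bot \<or> inf a x = a" using assms inf_le1[of a x] unfolding atom_def by blast
  then show ?thesis using inf_shunt[of a x] inf.absorb_iff1[of a x] by auto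
qed

lemma atom_le_sup_iff:
  assumes "atom a" shows "a \<le> sup x y \<longleftrightarrow> a \<le> x \<or> a \<le> y"
proof
  assume "a \<le> sup x y"
  then have "inf a (- x) \<le> y" by (simp add: sup_neg_inf)
  then have "a \<le> - x \<Longrightarrow> a \<le> y" by (simp add: inf_absorb1)
  then show "a \<le> x \<or> a \<le> y" using atom_le_or_le_compl[OF assms] by blast
qed (auto intro: le_supI1 le_supI2)

lemma atom_le_atom_iff: "atom a \<Longrightarrow> atom b \<Longrightarrow> a \<le> b \<longleftrightarrow> a = b"
  by (auto simp: atom_def)

lemma atoms_below_sup: "atoms_below (sup x y) = atoms_below x \<union> atoms_below y"
  by (auto simp: atoms_below_def atom_le_sup_iff)

lemma atoms_below_bot: "atoms_below bot = {}"
  by (auto simp: atoms_below_def atom_def bot_unique)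

lemma atoms_below_atom: "atom a \<Longrightarrow> atoms_below a = {a}"
  by (auto simp: atoms_below_def atom_le_atom_iff)

lemma atoms_below_top: "atoms_below top = {a. atom a}"
  by (simp add: atoms_below_def)

lemma exists_atom_below:
  fixes x :: "'a::{boolean_algebra, finite}"
  assumes "x \<noteq> bot" shows "\<exists>a. atom a \<and> a \<le> x"
proof -
  obtain a where "a \<noteq> bot" "a \<le> x" and minimal: "\<And>y. y \<noteq> bot \<Longrightarrow> y \<le> a \<Longrightarrow> a = y"
    using finite_has_minimal2[of "{y. y \<noteq> bot}" x] assms by auto
  have "y = bot \<or> y = a" if "y \<le> a" for y using minimal[of y] that by auto
  then have "atom a" using \<open>a \<noteq> bot\<close> by (simp add: atom_def)
  with \<open>a \<le> x\<close> show ?thesis by blast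
qed

lemma le_iff_atoms_below:
  fixes x y :: "'a::{boolean_algebra, finite}"
  shows "x \<le> y \<longleftrightarrow> atoms_below x \<subseteq> atoms_below y"
proof
  assume below: "atoms_below x \<subseteq> atoms_below y"
  show "x \<le> y"
  proof (rule ccontr)
    assume "\<not> x \<le> y"
    then have "inf x (- y) \<noteq> bot" using inf_shunt[of x "- y"] by simp
    then obtain a where a: "atom a" "a \<le> inf x (- y)" using exists_atom_below by blast
    then have "a \<le> y" "a \<le> - y" using below by (auto simp: atoms_below_def)
    then have "a = bot" by (metis bot_unique inf_compl_bot le_inf_iff)
    then show False using a(1) by (simp add: atom_def)
  qed
qed (auto simp: atoms_below_def)

lemma bij_betw_atoms_below:
  "bij_betw atoms_below (UNIV :: 'a::{boolean_algebra, finite} set) (Pow {a. atom a})"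
proof -
  have "inj (atoms_below :: 'a \<Rightarrow> 'a set)"
  proof (rule injI)
    fix x y :: 'a assume "atoms_below x = atoms_below y"
    then show "x = y" using le_iff_atoms_below[of x y] le_iff_atoms_below[of y x] by auto
  qed
  moreover have "S \<in> range atoms_below" if "S \<subseteq> {a :: 'a. atom a}" for S
  proof -
    have "finite S" by simp
    then show ?thesis using that
    proof (induction S rule: finite_induct)
      case empty
      show ?case using atoms_below_bot by (metis rangeI)
    next
      case (insert a S)
      then obtain x where "atoms_below x = S" by auto
      then have "atoms_below (sup a x) = insert a S"
        using insert.prems by (simp add: atoms_below_sup atoms_below_atom)
      then show ?case by (metis rangeI)
    qed
  qed
  moreover have "range atoms_below \<subseteq> Pow {a :: 'a. atom a}" by (auto simp: atoms_below_def)
  ultimately show ?thesis unfolding bij_betw_def by blast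
qed

lemma card_atoms:
  assumes "card (UNIV :: 'a::{boolean_algebra, finite} set) = 2 ^ n"
  shows "card {a :: 'a. atom a} = n"
proof -
  have "card (UNIV :: 'a set) = 2 ^ card {a :: 'a. atom a}"
    using bij_betw_same_card[OF bij_betw_atoms_below] by (simp add: card_Pow)
  then have "(2::nat) ^ card {a :: 'a. atom a} = 2 ^ n" using assms by linarith
  then show ?thesis using power_inject_exp[of "2::nat"] by simp
qed

lemma sup_eq_top_iff_atoms_below:
  fixes x y :: "'a::{boolean_algebra, finite}"
  shows "sup x y = top \<longleftrightarrow> atoms_below x \<union> atoms_below y = {a. atom a}"
proof -
  have "sup x y = top \<longleftrightarrow> atoms_below top \<subseteq> atoms_below (sup x y)"
    using le_iff_atoms_below[of top "sup x y"] top.extremum_unique by blast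
  also have "\<dots> \<longleftrightarrow> {a. atom a} \<subseteq> atoms_below x \<union> atoms_below y"
    by (simp add: atoms_below_sup atoms_below_top)
  also have "\<dots> \<longleftrightarrow> atoms_below x \<union> atoms_below y = {a. atom a}"
    by (auto simp: atoms_below_def)
  finally show ?thesis .
qed

lemma boolean_algebra_enumeration_by_bits:
  assumes "card (UNIV :: 'a::{boolean_algebra, finite} set) = 2 ^ n"
  obtains alpha :: "nat \<Rightarrow> 'a::{boolean_algebra, finite}" where "bij_betw alpha {..<2 ^ n} UNIV"
    and "\<And>i j. i < 2 ^ n \<Longrightarrow> j < 2 ^ n \<Longrightarrow>
           sup (alpha i) (alpha j) = top \<longleftrightarrow> (\<forall>p<n. bit i p \<or> bit j p)"
proof -
  obtain e where e: "bij_betw e {..<n} {a :: 'a. atom a}"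
    using ex_bij_betw_nat_finite[of "{a :: 'a. atom a}"] card_atoms[OF assms]
    by (auto simp: lessThan_atLeast0)
  have repr: "bij_betw (\<lambda>j. e ` bitset n j) {..<2 ^ n} (Pow {a :: 'a. atom a})"
    using bij_betw_trans[OF bij_betw_bitset bij_betw_Pow[OF e]] by (simp add: comp_def)
  define alpha where "alpha = (\<lambda>j. inv_into UNIV atoms_below (e ` bitset n j))"
  have "bij_betw alpha {..<2 ^ n} UNIV"
    using bij_betw_trans[OF repr bij_betw_inv_into[OF bij_betw_atoms_below]]
    by (simp add: alpha_def comp_def)
  moreover have "sup (alpha i) (alpha j) = top \<longleftrightarrow> (\<forall>p<n. bit i p \<or> bit j p)"
    if "i < 2 ^ n" "j < 2 ^ n" for i j
  proof -
    have below: "atoms_below (alpha j) = e ` bitset n j" if "j < 2 ^ n" for j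
      using that repr bij_betw_atoms_below unfolding alpha_def bij_betw_def
      by (metis f_inv_into_f image_eqI lessThan_iff)
    have "sup (alpha i) (alpha j) = top \<longleftrightarrow> e ` (bitset n i \<union> bitset n j) = e ` {..<n}"
      using below that e by (simp add: sup_eq_top_iff_atoms_below image_Un bij_betw_def)
    also have "\<dots> \<longleftrightarrow> bitset n i \<union> bitset n j = {..<n}"
      using e bitset_subset by (intro inj_on_image_eq_iff) (auto simp: bij_betw_def)
    finally show ?thesis by (simp add: bitset_Un_eq_iff)
  qed
  ultimately show ?thesis using that by blast
qed

lemma binop_transfer_along_bij:
  assumes "bij_betw f C B" and "\<And>x y. x \<in> B \<Longrightarrow> y \<in> B \<Longrightarrow> op x y \<in> B"
  shows "\<exists>star. (\<forall>w \<in> C. \<forall>w' \<in> C. star w w' \<in> C) \<and>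
                (\<forall>w \<in> C. \<forall>w' \<in> C. f (star w w') = op (f w) (f w'))"
proof -
  define star where "star w w' = inv_into C f (op (f w) (f w'))" for w w'
  have "op (f w) (f w') \<in> f ` C" if "w \<in> C" "w' \<in> C" for w w'
    using assms that by (auto simp: bij_betw_def)
  then show ?thesis
    by (intro exI[of _ star]) (auto simp: star_def inv_into_into f_inv_into_f)
qed

theorem theorem4p4:
  fixes k :: nat
  assumes "k \<ge> 1"
    and "card (UNIV :: ('a::{boolean_algebra, finite}) set) = 2 ^ (k + 1)"
  shows "(\<exists>alpha :: nat \<Rightarrow> 'a.
            bij_betw alpha {..<2 ^ (k + 1)} UNIV \<and>
            (\<forall>j < 2 ^ (k + 1). \<forall>s < 2 ^ (k + 1).
               attached_mat alpha j s = mmat (k + 1) j s))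
       \<and> (\<exists>(star :: nat list \<Rightarrow> nat list \<Rightarrow> nat list) (f :: nat list \<Rightarrow> 'a).
            (\<forall>w \<in> code_C (k + 1). \<forall>w' \<in> code_C (k + 1). star w w' \<in> code_C (k + 1)) \<and>
            bij_betw f (code_C (k + 1)) UNIV \<and>
            (\<forall>w \<in> code_C (k + 1). \<forall>w' \<in> code_C (k + 1). f (star w w') = sup (f w) (f w')))"
proof -
  obtain alpha :: "nat \<Rightarrow> 'a" where alpha: "bij_betw alpha {..<2 ^ (k + 1)} UNIV"
    and covers: "\<And>i j. i < 2 ^ (k + 1) \<Longrightarrow> j < 2 ^ (k + 1) \<Longrightarrow>
           sup (alpha i) (alpha j) = top \<longleftrightarrow> (\<forall>p<k + 1. bit i p \<or> bit j p)"
    using boolean_algebra_enumeration_by_bits[OF assms(2)] by blast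
  have attached: "attached_mat alpha j s = mmat (k + 1) j s"
    if "j < 2 ^ (k + 1)" "s < 2 ^ (k + 1)" for j s
    using that covers[OF that] by (simp add: attached_mat_def mmat_eq_bits)
  define f where "f = alpha \<circ> inv_into {..<2 ^ (k + 1)} (mrow (k + 1))"
  have f: "bij_betw f (code_C (k + 1)) UNIV"
    unfolding f_def using bij_betw_inv_into[OF bij_betw_mrow_code_C] alpha
    by (rule bij_betw_trans) simp
  obtain star where
    "\<forall>w \<in> code_C (k + 1). \<forall>w' \<in> code_C (k + 1). star w w' \<in> code_C (k + 1)"
    "\<forall>w \<in> code_C (k + 1). \<forall>w' \<in> code_C (k + 1). f (star w w') = sup (f w) (f w')"
    using binop_transfer_along_bij[OF f, of sup] by auto
  then show ?thesis using alpha attached f by blast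
qed

end
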